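(* Let $T$ be a set of SGD iterations with $T\subseteq\{s:s\ge\tau\}$, where Assumption 1 holds with constants $\tau,\gamma$, let $t\in T$, and let $\mathcal R_{\mathbf x}$ be a linear region of $f^{(t)}$. Suppose there exists $\mathbf k\in\mathbb R^{|T|}$ such that $$\prod_{l=d-1}^{1}[\mathbf S_l^{(t)}(\mathbf x)](i_l,i_l)=\sum_{k\in T}\mathbf k(k)\prod_{l=d-1}^{1}[\mathbf S_l^{(k)}(\mathbf x^{(k)})](i_l,i_l)$$ for all $i_l\in\{1,\dots,n_l\}$, $l=1,\dots,d-1$. Then $f^{(t)}$ is Lipschitz on $\mathcal R_{\mathbf x}$ with $$\lambda_{f^{(t)}}(\mathcal R_{\mathbf x})\le(1+\gamma)\sum_{k\in T}|\mathbf k(k)|\,\frac{|\mathbf S_d^{(t)}(\mathbf x)|}{|\mathbf S_d^{(t)}(\mathbf x^{(k)})|}\,\lambda_{f^{(k)}}(\mathcal R_{\mathbf x^{(k)}}),$$ where $\mathbf S_d^{(t)}(\mathbf z)=\rho_d'(u)$ evaluated at $u=\mathbf W_d^{(t)}f_{d-1}^{(t)}\circ\cdots\circ f_1^{(t)}(\mathbf z)+\mathbf b_d^{(t)}$.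
   Context: Network: $f(\mathbf x,\mathbf w)=f_d\circ\cdots\circ f_1(\mathbf x)$ with $f_l(\mathbf x)=\rho_l(\mathbf W_l\mathbf x+\mathbf b_l)$, $\mathbf W_l\in\mathbb R^{n_l\times n_{l-1}}$, $n_0=n$, $n_d=1$; $\rho_l$ ReLU for $l<d$, $\rho_d$ identity or sigmoid. SGD on training set $X$: at iteration $s$ a point $\mathbf x^{(s)}\in X$ is sampled and parameters updated by a gradient step; $f^{(s)}$ is the network with parameters $\mathbf W_l^{(s)},\mathbf b_l^{(s)}$. Activation matrices $\mathbf S_l^{(s)}(\mathbf x)=\mathrm{diag}(\mathbb 1[f_l\circ\cdots\circ f_1(\mathbf x,\mathbf w^{(s)})>0])$ for $l<d$. Local Lipschitz constant on the linear region $\mathcal R_{\mathbf x}$: $\lambda_{f^{(s)}}(\mathcal R_{\mathbf x}):=\|\mathbf S_d^{(s)}(\mathbf x)\mathbf W_d^{(s)}\mathbf S_{d-1}^{(s)}(\mathbf x)\cdots\mathbf S_1^{(s)}(\mathbf x)\mathbf W_1^{(s)}\|_2$. Activation vector $\mathbf s_s(\mathbf x):=\bigotimes_{l=d-1}^1\mathrm{diag}(\mathbf S_l^{(s)}(\mathbf x))$. Assumption 1: there exist $\tau,\gamma>0$ such that $\mathbf s_s(\mathbf x)=\mathbf s_{s'}(\mathbf x)$ and $\lambda_{f^{(s)}}(\mathcal R_{\mathbf x})\le(1+\gamma)\lambda_{f^{(s')}}(\mathcal R_{\mathbf x})$ for all $\mathbf x\in X$ and $s,s'\ge\tau$. *)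

theory Defs
  imports "HOL-Analysis.Analysis"
begin

text \<open>Vectors in R^m are functions nat => real, only entries 0..m-1 matter.
  Per-iteration parameters: W :: layer => row => column => real (layer l in 1..d,
  row < n l, column < n (l-1)), b :: layer => row => real.
  Iteration-indexed parameters are functions of the iteration number s.\<close>

definition relu :: "real \<Rightarrow> real" where
  "relu u = max 0 u"

definition sigmoid :: "real \<Rightarrow> real" where
  "sigmoid u = 1 / (1 + exp (- u))"

fun hid :: "(nat \<Rightarrow> nat) \<Rightarrow> (nat \<Rightarrow> nat \<Rightarrow> nat \<Rightarrow> real) \<Rightarrow> (nat \<Rightarrow> nat \<Rightarrow> real)
             \<Rightarrow> nat \<Rightarrow> (nat \<Rightarrow> real) \<Rightarrow> nat \<Rightarrow> real" where
  "hid n W b 0 x = x"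
| "hid n W b (Suc l) x =
     (\<lambda>i. relu ((\<Sum>j<n l. W (Suc l) i j * hid n W b l x j) + b (Suc l) i))"

text \<open>Diagonal entry (i,i) of the activation matrix S_l(x), for 1 <= l <= d-1.\<close>
definition S_hid :: "(nat \<Rightarrow> nat) \<Rightarrow> (nat \<Rightarrow> nat \<Rightarrow> nat \<Rightarrow> real) \<Rightarrow> (nat \<Rightarrow> nat \<Rightarrow> real)
             \<Rightarrow> nat \<Rightarrow> (nat \<Rightarrow> real) \<Rightarrow> nat \<Rightarrow> real" where
  "S_hid n W b l x i = (if hid n W b l x i > 0 then 1 else 0)"

text \<open>S_d(x) = rho_d'(u), u = W_d f_{d-1} o ... o f_1(x) + b_d (a scalar, n_d = 1).\<close>
definition S_out :: "(real \<Rightarrow> real) \<Rightarrow> (nat \<Rightarrow> nat) \<Rightarrow> nat \<Rightarrow> (nat \<Rightarrow> nat \<Rightarrow> nat \<Rightarrow> real)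
             \<Rightarrow> (nat \<Rightarrow> nat \<Rightarrow> real) \<Rightarrow> (nat \<Rightarrow> real) \<Rightarrow> real" where
  "S_out rho n d W b x =
     deriv rho ((\<Sum>j<n (d - 1). W d 0 j * hid n W b (d - 1) x j) + b d 0)"

text \<open>jac .. l x = S_l W_l S_{l-1} ... S_1 W_1 (an n_l x n_0 matrix), with S_d = S_out.\<close>
fun jac :: "(real \<Rightarrow> real) \<Rightarrow> (nat \<Rightarrow> nat) \<Rightarrow> nat \<Rightarrow> (nat \<Rightarrow> nat \<Rightarrow> nat \<Rightarrow> real)
             \<Rightarrow> (nat \<Rightarrow> nat \<Rightarrow> real) \<Rightarrow> (nat \<Rightarrow> real) \<Rightarrow> nat \<Rightarrow> nat \<Rightarrow> nat \<Rightarrow> real" where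
  "jac rho n d W b x 0 = (\<lambda>i j. if i = j then 1 else 0)"
| "jac rho n d W b x (Suc l) =
     (\<lambda>i j. (if Suc l = d then S_out rho n d W b x else S_hid n W b (Suc l) x i)
            * (\<Sum>m<n l. W (Suc l) i m * jac rho n d W b x l m j))"

definition op2norm :: "nat \<Rightarrow> nat \<Rightarrow> (nat \<Rightarrow> nat \<Rightarrow> real) \<Rightarrow> real" where
  "op2norm p q A = Sup {sqrt (\<Sum>i<p. (\<Sum>j<q. A i j * v j)\<^sup>2) | v. (\<Sum>j<q. (v j)\<^sup>2) \<le> 1}"

text \<open>Local Lipschitz constant lambda_f(R_x) = || S_d W_d S_{d-1} ... S_1 W_1 ||_2.\<close>
definition lip :: "(real \<Rightarrow> real) \<Rightarrow> (nat \<Rightarrow> nat) \<Rightarrow> nat \<Rightarrow> (nat \<Rightarrow> nat \<Rightarrow> nat \<Rightarrow> real)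
             \<Rightarrow> (nat \<Rightarrow> nat \<Rightarrow> real) \<Rightarrow> (nat \<Rightarrow> real) \<Rightarrow> real" where
  "lip rho n d W b x = op2norm (n d) (n 0) (jac rho n d W b x d)"

text \<open>Index tuples (i_1,...,i_{d-1}) with i_l < n_l, and the corresponding entry of the
  Kronecker-product activation vector s(x) = (x)_{l=d-1}^{1} diag(S_l(x)).\<close>
definition valid_idx :: "(nat \<Rightarrow> nat) \<Rightarrow> nat \<Rightarrow> (nat \<Rightarrow> nat) \<Rightarrow> bool" where
  "valid_idx n d idx \<longleftrightarrow> (\<forall>l\<in>{1..<d}. idx l < n l)"

definition actprod :: "(nat \<Rightarrow> nat) \<Rightarrow> nat \<Rightarrow> (nat \<Rightarrow> nat \<Rightarrow> nat \<Rightarrow> real)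
             \<Rightarrow> (nat \<Rightarrow> nat \<Rightarrow> real) \<Rightarrow> (nat \<Rightarrow> real) \<Rightarrow> (nat \<Rightarrow> nat) \<Rightarrow> real" where
  "actprod n d W b x idx = (\<Prod>l\<in>{1..<d}. S_hid n W b l x (idx l))"

definition assumption1 :: "(real \<Rightarrow> real) \<Rightarrow> (nat \<Rightarrow> nat) \<Rightarrow> nat
      \<Rightarrow> (nat \<Rightarrow> nat \<Rightarrow> nat \<Rightarrow> nat \<Rightarrow> real) \<Rightarrow> (nat \<Rightarrow> nat \<Rightarrow> nat \<Rightarrow> real)
      \<Rightarrow> (nat \<Rightarrow> real) set \<Rightarrow> nat \<Rightarrow> real \<Rightarrow> bool" where
  "assumption1 rho n d Ws bs X \<tau> \<gamma> \<longleftrightarrow> \<tau> > 0 \<and> \<gamma> > 0 \<and>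
     (\<forall>x\<in>X. \<forall>s s'. \<tau> \<le> s \<longrightarrow> \<tau> \<le> s' \<longrightarrow>
        (\<forall>idx. valid_idx n d idx \<longrightarrow>
            actprod n d (Ws s) (bs s) x idx = actprod n d (Ws s') (bs s') x idx) \<and>
        lip rho n d (Ws s) (bs s) x \<le> (1 + \<gamma>) * lip rho n d (Ws s') (bs s') x)"

end

theory Submission
  imports Defs
begin

text \<open>On a linear region the network is the matrix product
  \<open>S\<^sub>d W\<^sub>d S\<^sub>d\<^sub>-\<^sub>1 \<cdots> S\<^sub>1 W\<^sub>1\<close>, which is multilinear in the diagonals
  \<open>S\<^sub>1, \<dots>, S\<^sub>d\<^sub>-\<^sub>1\<close>. Its entries therefore depend linearly on the Kronecker product
  of these diagonals, so a linear relation between activation vectors transfers to the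
  Jacobians, with the output derivatives \<open>S\<^sub>d\<close> (nonzero for the identity and the
  sigmoid) rescaling the coefficients. Assumption 1 lets every Jacobian be computed with the
  weights of iteration \<open>t\<close> and then compared, up to \<open>1 + \<gamma>\<close>, with its own
  iteration; the triangle inequality for the operator norm of a row vector concludes.\<close>

fun masked_prod :: "(nat \<Rightarrow> nat) \<Rightarrow> (nat \<Rightarrow> nat \<Rightarrow> nat \<Rightarrow> real) \<Rightarrow> (nat \<Rightarrow> nat \<Rightarrow> real)
                    \<Rightarrow> nat \<Rightarrow> nat \<Rightarrow> nat \<Rightarrow> real" where
  "masked_prod n W D 0 = (\<lambda>i j. if i = j then 1 else 0)"
| "masked_prod n W D (Suc l) =
     (\<lambda>i j. D (Suc l) i * (\<Sum>m<n l. W (Suc l) i m * masked_prod n W D l m j))"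

lemma masked_prod_lin_zero:
  assumes "\<forall>idx. (\<forall>l'\<in>{1..l}. idx l' < n l') \<longrightarrow>
             (\<Sum>k\<in>K. c k * (\<Prod>l'\<in>{1..l}. D k l' (idx l'))) = 0"
  shows "\<forall>i<n l. \<forall>j. (\<Sum>k\<in>K. c k * masked_prod n W (D k) l i j) = 0"
  using assms
proof (induction l arbitrary: c)
  case 0
  then have "(\<Sum>k\<in>K. c k) = 0"
    by (drule_tac x="\<lambda>_. 0" in spec) simp
  then show ?case by simp
next
  case (Suc l)
  show ?case
  proof (intro allI impI)
    fix i j assume i: "i < n (Suc l)"
    define c' where "c' k = c k * D k (Suc l) i" for k
    have "(\<Sum>k\<in>K. c' k * (\<Prod>l'\<in>{1..l}. D k l' (idx l'))) = 0"
      if idx: "\<forall>l'\<in>{1..l}. idx l' < n l'" for idx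
    proof -
      define idx' where "idx' = idx(Suc l := i)"
      have "\<forall>l'\<in>{1..Suc l}. idx' l' < n l'"
        using idx i unfolding idx'_def by (auto simp: le_Suc_eq)
      then have "(\<Sum>k\<in>K. c k * (\<Prod>l'\<in>{1..Suc l}. D k l' (idx' l'))) = 0"
        using Suc.prems by blast
      moreover have "(\<Prod>l'\<in>{1..Suc l}. D k l' (idx' l'))
                     = D k (Suc l) i * (\<Prod>l'\<in>{1..l}. D k l' (idx l'))" for k
      proof -
        have "(\<Prod>l'\<in>{1..l}. D k l' (idx' l')) = (\<Prod>l'\<in>{1..l}. D k l' (idx l'))"
          by (rule prod.cong) (auto simp: idx'_def)
        then show ?thesis by (simp add: prod.cl_ivl_Suc idx'_def mult.commute)
      qed
      ultimately show ?thesis by (simp add: c'_def mult.assoc)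
    qed
    then have IH: "\<forall>m<n l. (\<Sum>k\<in>K. c' k * masked_prod n W (D k) l m j) = 0"
      using Suc.IH by blast
    have "(\<Sum>k\<in>K. c k * masked_prod n W (D k) (Suc l) i j)
        = (\<Sum>k\<in>K. \<Sum>m<n l. W (Suc l) i m * (c' k * masked_prod n W (D k) l m j))"
      by (simp add: c'_def sum_distrib_left mult_ac)
    also have "\<dots> = (\<Sum>m<n l. W (Suc l) i m * (\<Sum>k\<in>K. c' k * masked_prod n W (D k) l m j))"
      by (subst sum.swap) (simp add: sum_distrib_left)
    also have "\<dots> = 0" using IH by simp
    finally show "(\<Sum>k\<in>K. c k * masked_prod n W (D k) (Suc l) i j) = 0" .
  qed
qed

lemma masked_prod_lin_comb:
  assumes "finite K"
    and "\<forall>idx. (\<forall>l'\<in>{1..l}. idx l' < n l') \<longrightarrow>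
           (\<Prod>l'\<in>{1..l}. D0 l' (idx l')) = (\<Sum>k\<in>K. c k * (\<Prod>l'\<in>{1..l}. D k l' (idx l')))"
  shows "\<forall>i<n l. \<forall>j. masked_prod n W D0 l i j = (\<Sum>k\<in>K. c k * masked_prod n W (D k) l i j)"
proof -
  \<comment> \<open>Adjoin \<open>D0\<close> to the family, with coefficient \<open>-1\<close>, as the index \<open>None\<close>.\<close>
  let ?c = "case_option (-1) c"
  let ?D = "case_option D0 D"
  have "\<forall>idx. (\<forall>l'\<in>{1..l}. idx l' < n l') \<longrightarrow>
          (\<Sum>k\<in>insert None (Some ` K). ?c k * (\<Prod>l'\<in>{1..l}. ?D k l' (idx l'))) = 0"
    using assms by (simp add: sum.reindex)
  from masked_prod_lin_zero[OF this, of W] show ?thesis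
    using assms(1) by (simp add: sum.reindex)
qed

lemma jac_eq_masked_prod:
  "l < d \<Longrightarrow> jac rho n d W b x l = masked_prod n W (\<lambda>l. S_hid n W b l x) l"
  by (induction l) (auto simp: fun_eq_iff)

lemma jac_top:
  "jac rho n (Suc l) W b x (Suc l) i j =
     S_out rho n (Suc l) W b x * (\<Sum>m<n l. W (Suc l) i m * masked_prod n W (\<lambda>l. S_hid n W b l x) l m j)"
  using jac_eq_masked_prod[of l "Suc l" rho n W b x] by simp

lemma deriv_sigmoid: "deriv sigmoid u = exp (- u) / (1 + exp (- u))\<^sup>2"
proof -
  have pos: "0 < 1 + exp (- u)" by (simp add: add_pos_pos)
  have "(sigmoid has_real_derivative exp (- u) / (1 + exp (- u))\<^sup>2) (at u)"
    unfolding sigmoid_def[abs_def]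
    by (rule derivative_eq_intros refl | use pos in \<open>simp add: power2_eq_square\<close>)+
  then show ?thesis by (rule DERIV_imp_deriv)
qed

lemma S_out_nonzero:
  assumes "rho = id \<or> rho = sigmoid"
  shows "S_out rho n d W b x \<noteq> 0"
proof -
  have "1 + exp u \<noteq> 0" for u :: real using exp_gt_zero[of u] by linarith
  then show ?thesis using assms by (auto simp: S_out_def deriv_sigmoid)
qed

lemma op2norm_row:
  "op2norm (Suc 0) q A = Sup {\<bar>\<Sum>j<q. A 0 j * v j\<bar> | v. (\<Sum>j<q. (v j)\<^sup>2) \<le> 1}"
  unfolding op2norm_def by simp

lemma op2norm_row_cong:
  "(\<And>j. A 0 j = B 0 j) \<Longrightarrow> op2norm (Suc 0) q A = op2norm (Suc 0) q B"
  unfolding op2norm_row by simp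

lemma abs_le_one_if_sum_squares_le_one:
  fixes v :: "nat \<Rightarrow> real"
  assumes "(\<Sum>j<q. (v j)\<^sup>2) \<le> 1" and "j < q"
  shows "\<bar>v j\<bar> \<le> 1"
proof -
  have "(v j)\<^sup>2 \<le> (\<Sum>j<q. (v j)\<^sup>2)"
    using assms(2) by (intro member_le_sum) auto
  then have "(v j)\<^sup>2 \<le> 1" using assms(1) by linarith
  then show ?thesis by (simp add: abs_square_le_1)
qed

lemma op2norm_row_upper:
  assumes "(\<Sum>j<q. (v j)\<^sup>2) \<le> 1"
  shows "\<bar>\<Sum>j<q. A 0 j * v j\<bar> \<le> op2norm (Suc 0) q A"
proof -
  have "\<bar>\<Sum>j<q. A 0 j * w j\<bar> \<le> (\<Sum>j<q. \<bar>A 0 j\<bar>)" if w: "(\<Sum>j<q. (w j)\<^sup>2) \<le> 1" for w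
  proof -
    have "\<bar>\<Sum>j<q. A 0 j * w j\<bar> \<le> (\<Sum>j<q. \<bar>A 0 j\<bar> * \<bar>w j\<bar>)"
      by (rule order_trans[OF sum_abs]) (simp add: abs_mult)
    also have "\<dots> \<le> (\<Sum>j<q. \<bar>A 0 j\<bar>)"
      using abs_le_one_if_sum_squares_le_one[OF w]
      by (intro sum_mono) (auto intro: mult_left_le)
    finally show ?thesis .
  qed
  then have "bdd_above {\<bar>\<Sum>j<q. A 0 j * v j\<bar> | v. (\<Sum>j<q. (v j)\<^sup>2) \<le> 1}"
    by (intro bdd_aboveI) blast
  then show ?thesis unfolding op2norm_row using assms by (intro cSup_upper) blast+
qed

lemma op2norm_row_sum_le:
  assumes "finite K"
  shows "op2norm (Suc 0) q (\<lambda>i j. \<Sum>k\<in>K. a k * B k i j)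
         \<le> (\<Sum>k\<in>K. \<bar>a k\<bar> * op2norm (Suc 0) q (B k))"
  unfolding op2norm_row[of q "\<lambda>i j. \<Sum>k\<in>K. a k * B k i j"]
proof (rule cSup_least)
  show "{\<bar>\<Sum>j<q. (\<Sum>k\<in>K. a k * B k 0 j) * v j\<bar> | v. (\<Sum>j<q. (v j)\<^sup>2) \<le> 1} \<noteq> {}"
    by (auto intro!: exI[of _ "\<lambda>_. 0"])
next
  fix y assume "y \<in> {\<bar>\<Sum>j<q. (\<Sum>k\<in>K. a k * B k 0 j) * v j\<bar> | v. (\<Sum>j<q. (v j)\<^sup>2) \<le> 1}"
  then obtain v where v: "(\<Sum>j<q. (v j)\<^sup>2) \<le> 1"
    and y: "y = \<bar>\<Sum>j<q. (\<Sum>k\<in>K. a k * B k 0 j) * v j\<bar>" by blast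
  have "y = \<bar>\<Sum>k\<in>K. a k * (\<Sum>j<q. B k 0 j * v j)\<bar>"
    unfolding y by (simp add: sum_distrib_left sum_distrib_right mult_ac sum.swap[of _ K])
  also have "\<dots> \<le> (\<Sum>k\<in>K. \<bar>a k\<bar> * \<bar>\<Sum>j<q. B k 0 j * v j\<bar>)"
    by (rule order_trans[OF sum_abs]) (simp add: abs_mult)
  also have "\<dots> \<le> (\<Sum>k\<in>K. \<bar>a k\<bar> * op2norm (Suc 0) q (B k))"
    by (intro sum_mono mult_left_mono op2norm_row_upper[OF v]) auto
  finally show "y \<le> (\<Sum>k\<in>K. \<bar>a k\<bar> * op2norm (Suc 0) q (B k))" .
qed

lemma jac_top_lin_comb:
  assumes "d = Suc L" and "finite K"
    and "\<And>k. k \<in> K \<Longrightarrow> S_out rho n d W b (z k) \<noteq> 0"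
    and "\<forall>idx. valid_idx n d idx \<longrightarrow>
           actprod n d W b x idx = (\<Sum>k\<in>K. c k * actprod n d W b (z k) idx)"
  shows "jac rho n d W b x d i j =
           (\<Sum>k\<in>K. c k * S_out rho n d W b x / S_out rho n d W b (z k) * jac rho n d W b (z k) d i j)"
proof -
  let ?S = "S_out rho n d W b"
  let ?P = "\<lambda>y. masked_prod n W (\<lambda>l. S_hid n W b l y) L"
  have top: "jac rho n d W b y d i j = ?S y * (\<Sum>m<n L. W d i m * ?P y m j)" for y
    using jac_top[of rho n L W b y i j] assms(1) by simp
  have "{1..L} = {1..<d}" using assms(1) by auto
  then have "\<forall>m<n L. \<forall>j. ?P x m j = (\<Sum>k\<in>K. c k * ?P (z k) m j)"
    using assms(4) unfolding valid_idx_def actprod_def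
    by (intro masked_prod_lin_comb[OF assms(2)]) simp
  then have "jac rho n d W b x d i j = ?S x * (\<Sum>m<n L. W d i m * (\<Sum>k\<in>K. c k * ?P (z k) m j))"
    unfolding top by simp
  also have "\<dots> = (\<Sum>k\<in>K. c k * ?S x / ?S (z k) * (?S (z k) * (\<Sum>m<n L. W d i m * ?P (z k) m j)))"
    using assms(3) by (simp add: sum_distrib_left mult_ac sum.swap[of _ K])
  also have "\<dots> = (\<Sum>k\<in>K. c k * ?S x / ?S (z k) * jac rho n d W b (z k) d i j)"
    unfolding top ..
  finally show ?thesis .
qed

lemma lip_le_lin_comb:
  assumes "d = Suc L" and "n d = 1" and "finite K"
    and "\<And>k. k \<in> K \<Longrightarrow> S_out rho n d W b (z k) \<noteq> 0"
    and "\<forall>idx. valid_idx n d idx \<longrightarrow>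
           actprod n d W b x idx = (\<Sum>k\<in>K. c k * actprod n d W b (z k) idx)"
  shows "lip rho n d W b x \<le>
           (\<Sum>k\<in>K. \<bar>c k * S_out rho n d W b x / S_out rho n d W b (z k)\<bar> * lip rho n d W b (z k))"
proof -
  let ?a = "\<lambda>k. c k * S_out rho n d W b x / S_out rho n d W b (z k)"
  have "lip rho n d W b x = op2norm (Suc 0) (n 0) (\<lambda>i j. \<Sum>k\<in>K. ?a k * jac rho n d W b (z k) d i j)"
    unfolding lip_def assms(2) One_nat_def
    by (intro op2norm_row_cong jac_top_lin_comb[OF assms(1,3,4,5)]) auto
  also have "\<dots> \<le> (\<Sum>k\<in>K. \<bar>?a k\<bar> * lip rho n d W b (z k))"
    unfolding lip_def assms(2) One_nat_def by (rule op2norm_row_sum_le[OF assms(3)])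
  finally show ?thesis .
qed

theorem lemma2:
  fixes d :: nat and n :: "nat \<Rightarrow> nat" and rho :: "real \<Rightarrow> real"
    and Ws :: "nat \<Rightarrow> nat \<Rightarrow> nat \<Rightarrow> nat \<Rightarrow> real" and bs :: "nat \<Rightarrow> nat \<Rightarrow> nat \<Rightarrow> real"
    and X :: "(nat \<Rightarrow> real) set" and xs :: "nat \<Rightarrow> nat \<Rightarrow> real"
    and \<tau> :: nat and \<gamma> :: real and T :: "nat set" and t :: nat
    and x :: "nat \<Rightarrow> real" and c :: "nat \<Rightarrow> real"
  assumes "1 \<le> d" and "n d = 1" and "rho = id \<or> rho = sigmoid"
    and "\<forall>s. xs s \<in> X"
    and "assumption1 rho n d Ws bs X \<tau> \<gamma>"
    and "finite T" and "T \<subseteq> {s. \<tau> \<le> s}" and "t \<in> T"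
    and "\<forall>idx. valid_idx n d idx \<longrightarrow>
           actprod n d (Ws t) (bs t) x idx
           = (\<Sum>k\<in>T. c k * actprod n d (Ws k) (bs k) (xs k) idx)"
  shows "lip rho n d (Ws t) (bs t) x
         \<le> (1 + \<gamma>) * (\<Sum>k\<in>T. \<bar>c k\<bar>
               * (\<bar>S_out rho n d (Ws t) (bs t) x\<bar> / \<bar>S_out rho n d (Ws t) (bs t) (xs k)\<bar>)
               * lip rho n d (Ws k) (bs k) (xs k))"
proof -
  obtain L where dL: "d = Suc L" using assms(1) by (cases d) auto
  let ?S = "S_out rho n d (Ws t) (bs t)"
  have act_t: "actprod n d (Ws k) (bs k) (xs k) idx = actprod n d (Ws t) (bs t) (xs k) idx"
    if "k \<in> T" and "valid_idx n d idx" for k idx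
    using assms(4,5,7,8) that unfolding assumption1_def by blast
  have lip_t: "lip rho n d (Ws t) (bs t) (xs k) \<le> (1 + \<gamma>) * lip rho n d (Ws k) (bs k) (xs k)"
    if "k \<in> T" for k
    using assms(4,5,7,8) that unfolding assumption1_def by blast
  have "\<forall>idx. valid_idx n d idx \<longrightarrow>
      actprod n d (Ws t) (bs t) x idx = (\<Sum>k\<in>T. c k * actprod n d (Ws t) (bs t) (xs k) idx)"
    using assms(9) act_t by simp
  then have "lip rho n d (Ws t) (bs t) x
             \<le> (\<Sum>k\<in>T. \<bar>c k * ?S x / ?S (xs k)\<bar> * lip rho n d (Ws t) (bs t) (xs k))"
    using lip_le_lin_comb[where n=n, OF dL assms(2,6)] S_out_nonzero[OF assms(3)] by blast
  also have "\<dots> \<le> (\<Sum>k\<in>T. \<bar>c k * ?S x / ?S (xs k)\<bar> * ((1 + \<gamma>) * lip rho n d (Ws k) (bs k) (xs k)))"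
    using lip_t by (intro sum_mono mult_left_mono) auto
  also have "\<dots> = (1 + \<gamma>) * (\<Sum>k\<in>T. \<bar>c k\<bar> * (\<bar>?S x\<bar> / \<bar>?S (xs k)\<bar>) * lip rho n d (Ws k) (bs k) (xs k))"
    by (simp add: sum_distrib_left abs_mult mult_ac)
  finally show ?thesis .
qed

end
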